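(* For every $m\in\mathbb N$, $(\mathcal F_m,l_m)$ is a spherically complete ultrametric space.
   Context: Formulas are built from $\bot$ and atoms by $\to$ and $\Box$; sequents $\Gamma\Rightarrow\Delta$ have finite multisets of formulas on each side, and $\Box\Pi$ denotes $\{\Box B:B\in\Pi\}$. The calculus $\mathsf{Grz}_\infty+\mathsf{cut}$ has initial sequents $\Gamma,p\Rightarrow p,\Delta$ ($p$ atomic), $\Gamma,\bot\Rightarrow\Delta$, and rules $(\to_L)$ from $\Gamma,B\Rightarrow\Delta$ and $\Gamma\Rightarrow A,\Delta$ infer $\Gamma,A\to B\Rightarrow\Delta$; $(\to_R)$ from $\Gamma,A\Rightarrow B,\Delta$ infer $\Gamma\Rightarrow A\to B,\Delta$; $(\mathsf{refl})$ from $\Gamma,B,\Box B\Rightarrow\Delta$ infer $\Gamma,\Box B\Rightarrow\Delta$; $(\Box)$ from left premise $\Gamma,\Box\Pi\Rightarrow A,\Delta$ and right premise $\Box\Pi\Rightarrow A$ infer $\Gamma,\Box\Pi\Rightarrow\Box A,\Delta$; $(\mathsf{cut})$ from $\Gamma\Rightarrow A,\Delta$ and $\Gamma,A\Rightarrow\Delta$ infer $\Gamma\Rightarrow\Delta$. An $\infty$-proof is a possibly infinite tree of sequents built by these rules with leaves labelled by initial sequents, in which every infinite branch passes through a right premise of $(\Box)$ infinitely often. $\mathcal P$ is the set of all $\infty$-proofs. The $n$-fragment of an $\infty$-proof is the finite tree obtained by cutting every branch at the $n$-th (counting from the root) right premise of the rule $(\Box)$; the $1$-fragment is the main fragment, and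 the local height $|\pi|$ is the length of the longest branch in the main fragment of $\pi$ (an $\infty$-proof consisting only of an initial sequent has local height $0$). For $\pi,\tau\in\mathcal P$ write $\pi\sim_n\tau$ if their $n$-fragments coincide; $\pi\sim_0\tau$ always. $\mathcal F_m$ is the set of all functions $\mathsf u:\mathcal P^m\to\mathcal P$ that are non-expansive, i.e. for all tuples $\vec\pi,\vec\pi'$ and $n\in\mathbb N$, if $\pi_i\sim_n\pi'_i$ for all $i\le m$ then $\mathsf u(\vec\pi)\sim_n\mathsf u(\vec\pi')$. For $\mathsf a,\mathsf b\in\mathcal F_m$ write $\mathsf a\sim_{n,k}\mathsf b$ if $\mathsf a(\vec\pi)\sim_n\mathsf b(\vec\pi)$ for all $\vec\pi\in\mathcal P^m$ and moreover $\mathsf a(\vec\pi)\sim_{n+1}\mathsf b(\vec\pi)$ whenever $\sum_{i=1}^m|\pi_i|<k$. Define $l_m(\mathsf a,\mathsf b)=\frac12\inf\{2^{-n}+2^{-n-k}\mid \mathsf a\sim_{n,k}\mathsf b\}$. An ultrametric space is a metric space with $d(x,z)\le\max\{d(x,y),d(y,z)\}$; it is spherically complete if every descending sequence of closed balls $B_r(x)=\{y: d(x,y)\le r\}$ has a common point. *)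

theory Defs
  imports "HOL-Analysis.Analysis" "HOL-Library.Multiset" "HOL-Library.FuncSet"
begin

datatype fm = Bot | At nat | Imp fm fm | Bx fm

type_synonym sequent = "fm multiset \<times> fm multiset"  (* antecedent, succedent *)

datatype rule = AxAt | AxBot | ImpL | ImpR | Refl | BoxR | Cut

fun arity :: "rule \<Rightarrow> nat" where
  "arity AxAt = 0" | "arity AxBot = 0" | "arity ImpL = 2" | "arity ImpR = 1"
| "arity Refl = 1" | "arity BoxR = 2" | "arity Cut = 2"

text \<open>Local correctness of a rule instance: conclusion, premises (in order; for ImpL the
  first premise is Gamma,B => Delta; for BoxR child 0 is the left premise and child 1 the
  right premise; for Cut child 0 is Gamma => A,Delta).\<close>

fun rule_ok :: "rule \<Rightarrow> sequent \<Rightarrow> sequent list \<Rightarrow> bool" where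
  "rule_ok AxAt (G, D) ps = (ps = [] \<and> (\<exists>p. At p \<in># G \<and> At p \<in># D))"
| "rule_ok AxBot (G, D) ps = (ps = [] \<and> Bot \<in># G)"
| "rule_ok ImpL (G, D) ps = (\<exists>G' A B. G = G' + {#Imp A B#} \<and>
      ps = [(G' + {#B#}, D), (G', D + {#A#})])"
| "rule_ok ImpR (G, D) ps = (\<exists>D' A B. D = D' + {#Imp A B#} \<and>
      ps = [(G + {#A#}, D' + {#B#})])"
| "rule_ok Refl (G, D) ps = (\<exists>G' B. G = G' + {#Bx B#} \<and>
      ps = [(G' + {#B#} + {#Bx B#}, D)])"
| "rule_ok BoxR (G, D) ps = (\<exists>G' Pi D' A. G = G' + image_mset Bx Pi \<and> D = D' + {#Bx A#} \<and>
      ps = [(G, D' + {#A#}), (image_mset Bx Pi, {#A#})])"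
| "rule_ok Cut (G, D) ps = (\<exists>A. ps = [(G, D + {#A#}), (G + {#A#}, D)])"

text \<open>A (possibly infinite) tree is given by its nodes, addressed by lists of child indices;
  each node carries a sequent and the rule applied to it.\<close>

type_synonym tree = "nat list \<Rightarrow> (sequent \<times> rule) option"

definition seq_at :: "tree \<Rightarrow> nat list \<Rightarrow> sequent" where
  "seq_at t w = fst (the (t w))"

definition rule_at :: "tree \<Rightarrow> nat list \<Rightarrow> rule" where
  "rule_at t w = snd (the (t w))"

definition right_step :: "tree \<Rightarrow> nat list \<Rightarrow> nat \<Rightarrow> bool" where
  "right_step t v i \<longleftrightarrow> t v \<noteq> None \<and> rule_at t v = BoxR \<and> i = 1"

definition is_inf_proof :: "tree \<Rightarrow> bool" where
  "is_inf_proof t \<longleftrightarrow>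
     t [] \<noteq> None \<and>
     (\<forall>w i. t (w @ [i]) \<noteq> None \<longrightarrow> t w \<noteq> None) \<and>
     (\<forall>w. t w \<noteq> None \<longrightarrow> (\<forall>i. t (w @ [i]) \<noteq> None \<longleftrightarrow> i < arity (rule_at t w))) \<and>
     (\<forall>w. t w \<noteq> None \<longrightarrow>
        rule_ok (rule_at t w) (seq_at t w) (map (\<lambda>i. seq_at t (w @ [i])) [0..<arity (rule_at t w)])) \<and>
     (\<forall>f :: nat \<Rightarrow> nat. (\<forall>k. t (map f [0..<k]) \<noteq> None) \<longrightarrow>
        (\<forall>N. \<exists>k\<ge>N. right_step t (map f [0..<k]) (f k)))"

definition Proofs :: "tree set" where
  "Proofs = {t. is_inf_proof t}"

definition rcount :: "tree \<Rightarrow> nat list \<Rightarrow> nat" where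
  "rcount t w = card {j. j < length w \<and> right_step t (take j w) (w ! j)}"

text \<open>The n-fragment: all nodes reached before passing the n-th right premise of Box, plus
  these n-th right premises themselves as leaves (carrying their sequent only).\<close>
definition fragment :: "nat \<Rightarrow> tree \<Rightarrow> nat list \<Rightarrow> (sequent \<times> rule option) option" where
  "fragment n t w =
     (if t w \<noteq> None \<and> rcount t (butlast w) < n
      then Some (seq_at t w, if rcount t w < n then Some (rule_at t w) else None)
      else None)"

definition loc_height :: "tree \<Rightarrow> nat" where
  "loc_height t = Max {length w | w. fragment 1 t w \<noteq> None}"

definition sim :: "nat \<Rightarrow> tree \<Rightarrow> tree \<Rightarrow> bool" where
  "sim n p q \<longleftrightarrow> fragment n p = fragment n q"
  (* for n = 0 both fragments are empty, so sim 0 holds always *)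

definition Tuples :: "nat \<Rightarrow> tree list set" where
  "Tuples m = {ps. length ps = m \<and> set ps \<subseteq> Proofs}"

definition Fm :: "nat \<Rightarrow> (tree list \<Rightarrow> tree) set" where
  "Fm m = {u. u \<in> extensional (Tuples m) \<and> (\<forall>ps\<in>Tuples m. u ps \<in> Proofs) \<and>
             (\<forall>ps\<in>Tuples m. \<forall>qs\<in>Tuples m. \<forall>n.
                (\<forall>i<m. sim n (ps ! i) (qs ! i)) \<longrightarrow> sim n (u ps) (u qs))}"

definition sim_nk :: "nat \<Rightarrow> nat \<Rightarrow> nat \<Rightarrow> (tree list \<Rightarrow> tree) \<Rightarrow> (tree list \<Rightarrow> tree) \<Rightarrow> bool" where
  "sim_nk m n k a b \<longleftrightarrow>
     (\<forall>ps\<in>Tuples m. sim n (a ps) (b ps)) \<and>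
     (\<forall>ps\<in>Tuples m. sum_list (map loc_height ps) < k \<longrightarrow> sim (Suc n) (a ps) (b ps))"

definition lm :: "nat \<Rightarrow> (tree list \<Rightarrow> tree) \<Rightarrow> (tree list \<Rightarrow> tree) \<Rightarrow> real" where
  "lm m a b = 1/2 * Inf {(1/2::real) ^ n + (1/2) ^ (n + k) | n k. sim_nk m n k a b}"

definition ultrametric_space :: "'a set \<Rightarrow> ('a \<Rightarrow> 'a \<Rightarrow> real) \<Rightarrow> bool" where
  "ultrametric_space M d \<longleftrightarrow> Metric_space M d \<and>
     (\<forall>x\<in>M. \<forall>y\<in>M. \<forall>z\<in>M. d x z \<le> max (d x y) (d y z))"

definition closed_ball_in :: "'a set \<Rightarrow> ('a \<Rightarrow> 'a \<Rightarrow> real) \<Rightarrow> 'a \<Rightarrow> real \<Rightarrow> 'a set" where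
  "closed_ball_in M d x r = {y\<in>M. d x y \<le> r}"

definition spherically_complete :: "'a set \<Rightarrow> ('a \<Rightarrow> 'a \<Rightarrow> real) \<Rightarrow> bool" where
  "spherically_complete M d \<longleftrightarrow>
     (\<forall>(x :: nat \<Rightarrow> 'a) (r :: nat \<Rightarrow> real).
        (\<forall>k. x k \<in> M \<and> 0 \<le> r k) \<and>
        (\<forall>k. closed_ball_in M d (x (Suc k)) (r (Suc k)) \<subseteq> closed_ball_in M d (x k) (r k))
        \<longrightarrow> (\<exists>y. \<forall>k. y \<in> closed_ball_in M d (x k) (r k)))"

end

theory Submission
  imports Defs
begin

text \<open>
  The distance \<open>lm m a b\<close> is half the weight \<open>2 ^ (-n) + 2 ^ (-n-k)\<close> of the
  lexicographically greatest pair \<open>(n, k)\<close> with \<open>sim_nk m n k a b\<close>; the relations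
  \<open>sim_nk\<close> are transitive and weaken along the lexicographic order, which gives the strong
  triangle inequality.

  For a descending sequence of balls, the centres \<open>x k\<close> satisfy \<open>sim_nk\<close>-relations with
  lexicographically nondecreasing indices, i.e. on each tuple of proofs they form a sequence
  that is Cauchy for \<open>sim\<close> with nondecreasing levels. Infinite proofs are complete for such
  sequences: the pointwise limit tree agrees near every node with a member of the sequence,
  and along an infinite branch it inherits infinitely many right premises of Box from a
  member that agrees with it on a large fragment. Taking these limits uniformly in the tuple
  yields a non-expansive operation lying in every ball.
\<close>

section \<open>Fragments and the relations \<open>sim n\<close>\<close>

lemma rcount_le_length: "rcount t w \<le> length w"
proof -
  have "{j. j < length w \<and> right_step t (take j w) (w ! j)} \<subseteq> {..<length w}" by auto
  then show ?thesis unfolding rcount_def using card_mono[of "{..<length w}"] by fastforce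
qed

lemma rcount_take_le: "rcount t (take j w) \<le> rcount t w"
proof -
  have "{i. i < length (take j w) \<and> right_step t (take i (take j w)) (take j w ! i)}
     \<subseteq> {i. i < length w \<and> right_step t (take i w) (w ! i)}"
    by (auto simp: min_def)
  then show ?thesis unfolding rcount_def by (intro card_mono) auto
qed

lemma rcount_butlast_le: "rcount t (butlast w) \<le> rcount t w"
  using rcount_take_le[of t "length w - 1" w] by (simp add: butlast_conv_take)

lemma rcount_cong:
  assumes "\<And>j i. j < length w \<Longrightarrow> right_step t (take j w) i = right_step t' (take j w) i"
  shows "rcount t w = rcount t' w"
  unfolding rcount_def using assms by (metis (lifting))

lemma fragment_cong:
  assumes "\<And>j. j \<le> length w \<Longrightarrow> t (take j w) = t' (take j w)"
  shows "fragment n t w = fragment n t' w"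
proof -
  have rs: "right_step t (take j w) i = right_step t' (take j w) i" if "j < length w" for j i
    using assms that unfolding right_step_def rule_at_def by simp
  have "rcount t w = rcount t' w"
    using rs by (rule rcount_cong)
  moreover have "rcount t (butlast w) = rcount t' (butlast w)"
    using rs by (intro rcount_cong) (auto simp: butlast_conv_take)
  ultimately show ?thesis
    using assms[of "length w"] unfolding fragment_def seq_at_def rule_at_def by simp
qed

lemma fragment_if_rcount_less:
  assumes "t w \<noteq> None" "rcount t w < n"
  shows "fragment n t w = Some (seq_at t w, Some (rule_at t w))"
  using assms rcount_butlast_le[of t w] unfolding fragment_def by auto

lemma fragment_eq_SomeD:
  assumes "fragment n t w = Some (s, Some r)"
  shows "t w \<noteq> None" "rcount t w < n" "rule_at t w = r" "seq_at t w = s"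
  using assms unfolding fragment_def by (auto split: if_splits)

lemma sim_0 [simp]: "sim 0 p q"
  unfolding sim_def fragment_def by auto

lemma sim_refl [simp]: "sim n p p"
  unfolding sim_def by simp

lemma sim_sym: "sim n p q \<Longrightarrow> sim n q p"
  unfolding sim_def by simp

lemma sim_trans: "sim n p q \<Longrightarrow> sim n q r \<Longrightarrow> sim n p r"
  unfolding sim_def by simp

lemma sim_imp_eq_short:
  assumes "sim n p q" "length w < n"
  shows "p w = q w"
proof -
  have frag: "fragment n t w = map_option (\<lambda>(s, r). (s, Some r)) (t w)" for t
    using rcount_le_length[of t w] rcount_le_length[of t "butlast w"] assms(2)
    unfolding fragment_def seq_at_def rule_at_def by (cases "t w") auto
  then have "map_option (\<lambda>(s, r). (s, Some r)) (p w) = map_option (\<lambda>(s, r). (s, Some r)) (q w)"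
    using assms(1) unfolding sim_def by metis
  then show ?thesis by (cases "p w"; cases "q w") auto
qed

lemma sim_all_imp_eq: "(\<And>n. sim n p q) \<Longrightarrow> p = q"
  using sim_imp_eq_short[of "Suc (length w)" p q w for w] by blast

lemma is_inf_proofD:
  assumes "is_inf_proof t"
  shows "t [] \<noteq> None"
    and "t (w @ [i]) \<noteq> None \<Longrightarrow> t w \<noteq> None"
    and "t w \<noteq> None \<Longrightarrow> t (w @ [i]) \<noteq> None \<longleftrightarrow> i < arity (rule_at t w)"
    and "t w \<noteq> None \<Longrightarrow>
      rule_ok (rule_at t w) (seq_at t w) (map (\<lambda>i. seq_at t (w @ [i])) [0..<arity (rule_at t w)])"
  using assms unfolding is_inf_proof_def by blast+

lemma is_inf_proof_prefix:
  assumes "is_inf_proof t" "t w \<noteq> None"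
  shows "t (take j w) \<noteq> None"
proof -
  have "t (u @ v) \<noteq> None \<Longrightarrow> t u \<noteq> None" for u v
  proof (induction v rule: rev_induct)
    case (snoc x xs)
    then show ?case using is_inf_proofD(2)[OF assms(1)] by (metis append_assoc)
  qed simp
  then show ?thesis using assms(2) by (metis append_take_drop_id)
qed

lemma sim_rule_at_prefix:
  assumes "is_inf_proof p" "sim n p q" "p w \<noteq> None" "rcount p (butlast w) < n" "j < length w"
  shows "q (take j w) \<noteq> None" "rule_at q (take j w) = rule_at p (take j w)"
proof -
  have "take j w = take j (butlast w)"
    using assms(5) by (simp add: butlast_conv_take)
  then have "rcount p (take j w) < n"
    using rcount_take_le[of p j "butlast w"] assms(4) by simp
  then have "fragment n q (take j w) = Some (seq_at p (take j w), Some (rule_at p (take j w)))"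
    using fragment_if_rcount_less is_inf_proof_prefix[OF assms(1,3)] assms(2)
    unfolding sim_def by metis
  then show "q (take j w) \<noteq> None" "rule_at q (take j w) = rule_at p (take j w)"
    by (auto dest: fragment_eq_SomeD)
qed

lemma sim_rcount_eq:
  assumes "is_inf_proof p" "sim n p q" "p w \<noteq> None" "rcount p (butlast w) < n"
  shows "rcount q w = rcount p w" "rcount q (butlast w) = rcount p (butlast w)"
proof -
  have rs: "right_step q (take j w) i = right_step p (take j w) i" if "j < length w" for j i
    using sim_rule_at_prefix[OF assms that] is_inf_proof_prefix[OF assms(1,3)]
    unfolding right_step_def by auto
  then show "rcount q w = rcount p w"
    by (intro rcount_cong) auto
  show "rcount q (butlast w) = rcount p (butlast w)"
    using rs by (intro rcount_cong) (auto simp: butlast_conv_take)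
qed

lemma sim_mono_fragment:
  assumes "is_inf_proof p" "sim n p q" "n' \<le> n" "p w \<noteq> None" "rcount p (butlast w) < n'"
  shows "fragment n' p w = fragment n' q w"
proof -
  have lt: "rcount p (butlast w) < n" using assms by simp
  note rc = sim_rcount_eq[OF assms(1,2,4) lt]
  have "fragment n p w = Some (seq_at p w, if rcount p w < n then Some (rule_at p w) else None)"
    using assms(4) lt unfolding fragment_def by simp
  then have "fragment n q w = Some (seq_at p w, if rcount p w < n then Some (rule_at p w) else None)"
    using assms(2) unfolding sim_def by simp
  then have q: "q w \<noteq> None" "seq_at q w = seq_at p w"
    and rule: "rcount p w < n \<Longrightarrow> rule_at q w = rule_at p w"
    using rc unfolding fragment_def by (auto split: if_splits)
  show ?thesis
    using assms(3,4,5) q rule rc unfolding fragment_def by auto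
qed

lemma sim_mono:
  assumes "is_inf_proof p" "is_inf_proof q" "sim n p q" "n' \<le> n"
  shows "sim n' p q"
  unfolding sim_def
proof
  fix w
  show "fragment n' p w = fragment n' q w"
  proof (cases "p w \<noteq> None \<and> rcount p (butlast w) < n'")
    case True
    then show ?thesis using sim_mono_fragment[OF assms(1,3,4)] by blast
  next
    case p: False
    show ?thesis
    proof (cases "q w \<noteq> None \<and> rcount q (butlast w) < n'")
      case True
      then show ?thesis using sim_mono_fragment[OF assms(2) sim_sym[OF assms(3)] assms(4)] by metis
    next
      case False
      with p show ?thesis unfolding fragment_def by auto
    qed
  qed
qed

lemma loc_height_sim:
  assumes "is_inf_proof p" "is_inf_proof q" "sim n p q" "0 < n"
  shows "loc_height p = loc_height q"
  using sim_mono[OF assms(1-3), of 1] assms(4) unfolding loc_height_def sim_def by simp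

section \<open>Limits of infinite proofs\<close>

lemma is_inf_proofI_local:
  fixes y :: tree
  assumes node: "\<And>w. \<exists>t. is_inf_proof t \<and> y w = t w \<and> (\<forall>i. y (w @ [i]) = t (w @ [i]))"
    and branch: "\<And>f N. \<forall>k. y (map f [0..<k]) \<noteq> None \<Longrightarrow> \<exists>k\<ge>N. right_step y (map f [0..<k]) (f k)"
  shows "is_inf_proof y"
proof -
  have root: "y [] \<noteq> None"
    using node[of "[]"] is_inf_proofD(1) by metis
  have parent: "y w \<noteq> None" if "y (w @ [i]) \<noteq> None" for w i
    using node[of w] is_inf_proofD(2) that by metis
  have step: "(\<forall>i. y (w @ [i]) \<noteq> None \<longleftrightarrow> i < arity (rule_at y w)) \<and>
      rule_ok (rule_at y w) (seq_at y w) (map (\<lambda>i. seq_at y (w @ [i])) [0..<arity (rule_at y w)])"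
    if "y w \<noteq> None" for w
  proof -
    obtain t where t: "is_inf_proof t" "y w = t w" "\<And>i. y (w @ [i]) = t (w @ [i])"
      using node by blast
    then have "rule_at y w = rule_at t w" "seq_at y w = seq_at t w"
      "\<And>i. seq_at y (w @ [i]) = seq_at t (w @ [i])"
      unfolding rule_at_def seq_at_def by simp_all
    then show ?thesis
      using is_inf_proofD(3,4)[OF t(1)] t(2,3) that by simp
  qed
  show ?thesis
    unfolding is_inf_proof_def using root parent step branch by blast
qed

text \<open>A branch of \<open>y\<close> with only \<open>N\<close> right premises of Box would lie in the \<open>Suc N\<close>-fragment of
  \<open>y\<close>, hence be a branch of \<open>t\<close> with the same rules.\<close>

lemma sim_right_step_along_branch:
  assumes t: "is_inf_proof t" and sim: "sim (Suc N) t y" and branch: "\<forall>k. y (map f [0..<k]) \<noteq> None"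
  shows "\<exists>k\<ge>N. right_step y (map f [0..<k]) (f k)"
proof (rule ccontr)
  assume none: "\<not> (\<exists>k\<ge>N. right_step y (map f [0..<k]) (f k))"
  have rcount: "rcount y (map f [0..<k]) < Suc N" for k
  proof -
    have "{j. j < length (map f [0..<k]) \<and> right_step y (take j (map f [0..<k])) (map f [0..<k] ! j)}
        \<subseteq> {..<N}"
      using none by (auto simp: take_map not_le)
    then show ?thesis
      unfolding rcount_def by (metis card_lessThan card_mono finite_lessThan le_imp_less_Suc)
  qed
  have "fragment (Suc N) t (map f [0..<k]) =
      Some (seq_at y (map f [0..<k]), Some (rule_at y (map f [0..<k])))" for k
    using fragment_if_rcount_less[OF _ rcount] branch sim unfolding sim_def by simp
  then have same: "t (map f [0..<k]) \<noteq> None" "rule_at t (map f [0..<k]) = rule_at y (map f [0..<k])"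
    for k using fragment_eq_SomeD(1,3) by metis+
  obtain k where "k \<ge> N" "right_step t (map f [0..<k]) (f k)"
    using t same(1) unfolding is_inf_proof_def by blast
  then show False
    using none same branch unfolding right_step_def by auto
qed

lemma sim_diagonal_tree:
  fixes t :: "nat \<Rightarrow> tree" and M :: "nat \<Rightarrow> nat"
  assumes "mono M" and tail: "\<And>n l. M n \<le> l \<Longrightarrow> sim n (t (M n)) (t l)"
  shows "sim n (t (M n)) (\<lambda>w. t (M (Suc (length w))) w)"
  unfolding sim_def
proof
  fix w :: "nat list"
  define L where "L = max (M n) (M (Suc (length w)))"
  have "t (M (Suc j)) (take j w) = t L (take j w)" if "j \<le> length w" for j
    using sim_imp_eq_short[OF tail, of "Suc j" L "take j w"]
      monoD[OF \<open>mono M\<close>, of "Suc j" "Suc (length w)"] that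
    unfolding L_def by (simp add: le_max_iff_disj)
  then have "fragment n (\<lambda>w. t (M (Suc (length w))) w) w = fragment n (t L) w"
    by (intro fragment_cong) simp
  moreover have "sim n (t (M n)) (t L)"
    unfolding L_def by (rule tail) simp
  ultimately show "fragment n (t (M n)) w = fragment n (\<lambda>w. t (M (Suc (length w))) w) w"
    unfolding sim_def by simp
qed

lemma is_inf_proof_limit:
  fixes t :: "nat \<Rightarrow> tree" and e :: "nat \<Rightarrow> nat"
  assumes proofs: "\<And>j. is_inf_proof (t j)" and "mono e" and unbounded: "\<And>n. \<exists>j. n \<le> e j"
    and cauchy: "\<And>j l. j \<le> l \<Longrightarrow> sim (e j) (t j) (t l)"
  shows "\<exists>y. is_inf_proof y \<and> (\<forall>j. sim (e j) (t j) y)"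
proof -
  define M where "M n = (LEAST j. n \<le> e j)" for n
  have M: "n \<le> e (M n)" for n
    unfolding M_def using unbounded[of n] by (rule LeastI_ex)
  have M_least: "n \<le> e j \<Longrightarrow> M n \<le> j" for n j
    unfolding M_def by (rule Least_le)
  have M_mono: "n \<le> n' \<Longrightarrow> M n \<le> M n'" for n n'
    using M M_least le_trans by blast
  have tail: "sim n (t (M n)) (t l)" if "M n \<le> l" for n l
    using sim_mono[OF proofs proofs cauchy[OF that] M] .
  define y where "y w = t (M (Suc (length w))) w" for w
  have y_eq: "y w = t l w" if "M (Suc (length w)) \<le> l" for w l
    unfolding y_def using sim_imp_eq_short[OF tail[OF that]] by simp
  have y_sim: "sim n (t (M n)) y" for n
    unfolding y_def using sim_diagonal_tree[of M t] M_mono tail by (simp add: monoI)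
  have "is_inf_proof y"
  proof (rule is_inf_proofI_local)
    show "\<exists>t. is_inf_proof t \<and> y w = t w \<and> (\<forall>i. y (w @ [i]) = t (w @ [i]))" for w
    proof (intro exI conjI allI)
      let ?L = "M (Suc (Suc (length w)))"
      show "is_inf_proof (t ?L)" by (rule proofs)
      show "y w = t ?L w"
        using M_mono by (intro y_eq) simp
      show "y (w @ [i]) = t ?L (w @ [i])" for i
        by (intro y_eq) simp
    qed
    show "\<forall>k. y (map f [0..<k]) \<noteq> None \<Longrightarrow> \<exists>k\<ge>N. right_step y (map f [0..<k]) (f k)" for f N
      using sim_right_step_along_branch[OF proofs y_sim] by blast
  qed
  moreover have "sim (e j) (t j) y" for j
    using y_sim[of "e j"] tail[OF M_least, of "e j" j] sim_sym sim_trans by blast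
  ultimately show ?thesis by blast
qed

lemma mono_bdd_above_stable:
  fixes f :: "nat \<Rightarrow> nat"
  assumes "mono f" "bdd_above (range f)"
  shows "\<exists>K. \<forall>k\<ge>K. f k = f K"
proof -
  have fin: "finite (range f)"
    using assms(2) by (simp add: bdd_above_nat)
  obtain K where "f K = Max (range f)"
    using Max_in[OF fin] by auto
  then show ?thesis
    using assms(1) Max_ge[OF fin] by (metis le_antisym monoD rangeI)
qed

lemma not_bdd_above_range_natE:
  fixes e :: "'a \<Rightarrow> nat"
  assumes "\<not> bdd_above (range e)"
  obtains j where "n \<le> e j"
  using assms by (meson bdd_aboveI2 nle_le)

text \<open>When \<open>e\<close> is bounded the limit is not unique; it is then taken to be the member \<open>t K\<close> at an
  index \<open>K\<close> determined by \<open>e\<close> alone, so that limits of \<open>sim n\<close>-close sequences with the same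
  levels are again \<open>sim n\<close>-close (\<open>proof_limit_sim\<close>).\<close>

definition proof_limit :: "(nat \<Rightarrow> tree) \<Rightarrow> (nat \<Rightarrow> nat) \<Rightarrow> tree" where
  "proof_limit t e =
     (if bdd_above (range e) then t (LEAST K. \<forall>k\<ge>K. e k = e K)
      else SOME y. is_inf_proof y \<and> (\<forall>j. sim (e j) (t j) y))"

lemma proof_limit:
  fixes t :: "nat \<Rightarrow> tree" and e :: "nat \<Rightarrow> nat"
  assumes proofs: "\<And>j. is_inf_proof (t j)" and "mono e"
    and cauchy: "\<And>j l. j \<le> l \<Longrightarrow> sim (e j) (t j) (t l)"
  shows "is_inf_proof (proof_limit t e) \<and> (\<forall>j. sim (e j) (t j) (proof_limit t e))"
proof (cases "bdd_above (range e)")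
  case True
  define K where "K = (LEAST K. \<forall>k\<ge>K. e k = e K)"
  have K: "\<forall>k\<ge>K. e k = e K"
    unfolding K_def using mono_bdd_above_stable[OF \<open>mono e\<close> True] by (rule LeastI_ex)
  have "sim (e j) (t j) (t K)" for j
  proof (cases "j \<le> K")
    case True
    then show ?thesis using cauchy by blast
  next
    case False
    then have "sim (e K) (t K) (t j)" "e j = e K"
      using cauchy[of K j] K[rule_format, of j] by simp_all
    then show ?thesis by (simp add: sim_sym)
  qed
  then show ?thesis
    using True proofs unfolding proof_limit_def K_def by simp
next
  case False
  then have "\<exists>j. n \<le> e j" for n
    by (metis not_bdd_above_range_natE)
  then have "\<exists>y. is_inf_proof y \<and> (\<forall>j. sim (e j) (t j) y)"
    using is_inf_proof_limit[OF proofs \<open>mono e\<close> _ cauchy] by blast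
  moreover have "proof_limit t e = (SOME y. is_inf_proof y \<and> (\<forall>j. sim (e j) (t j) y))"
    using False unfolding proof_limit_def by simp
  ultimately show ?thesis
    using someI_ex[of "\<lambda>y. is_inf_proof y \<and> (\<forall>j. sim (e j) (t j) y)"] by simp
qed

section \<open>Ultrametric spaces\<close>

lemma ultrametric_spaceI:
  assumes nonneg: "\<And>x y. 0 \<le> d x y" and commute: "\<And>x y. d x y = d y x"
    and zero: "\<And>x y. x \<in> M \<Longrightarrow> y \<in> M \<Longrightarrow> d x y = 0 \<longleftrightarrow> x = y"
    and ultra: "\<And>x y z. x \<in> M \<Longrightarrow> y \<in> M \<Longrightarrow> z \<in> M \<Longrightarrow> d x z \<le> max (d x y) (d y z)"
  shows "ultrametric_space M d"
  unfolding ultrametric_space_def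
proof (intro conjI ballI ultra)
  show "Metric_space M d"
  proof
    show "d x z \<le> d x y + d y z" if "x \<in> M" "y \<in> M" "z \<in> M" for x y z
      using ultra[OF that] nonneg[of x y] nonneg[of y z] by linarith
  qed (use nonneg commute zero in auto)
qed

lemma ultrametric_dist_le_radius:
  assumes "ultrametric_space M d" "x \<in> M" "y \<in> M" "z \<in> M" "d x y \<le> r" "d x z \<le> r"
  shows "d y z \<le> r"
proof -
  have "Metric_space M d" "d y z \<le> max (d y x) (d x z)"
    using assms(1-4) unfolding ultrametric_space_def by blast+
  then show ?thesis
    using assms(5,6) Metric_space.commute by fastforce
qed

lemma ultrametric_nested_balls_centres:
  assumes ultra: "ultrametric_space M d" and x: "\<And>k. x k \<in> M" and r: "\<And>k. 0 \<le> r k"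
    and nested: "\<And>k. closed_ball_in M d (x (Suc k)) (r (Suc k)) \<subseteq> closed_ball_in M d (x k) (r k)"
  shows ultrametric_nested_balls_centre_mem: "k \<le> l \<Longrightarrow> x l \<in> closed_ball_in M d (x k) (r k)"
    and ultrametric_nested_balls_centres_close: "i \<le> k \<Longrightarrow> i \<le> l \<Longrightarrow> d (x k) (x l) \<le> r i"
proof -
  define B where "B k = closed_ball_in M d (x k) (r k)" for k
  have metric: "Metric_space M d"
    using ultra unfolding ultrametric_space_def by blast
  have centre: "x k \<in> B k" for k
    using x r Metric_space.zero[OF metric, of "x k" "x k"] unfolding B_def closed_ball_in_def by simp
  have mono: "k \<le> l \<Longrightarrow> B l \<subseteq> B k" for k l
    using nested unfolding B_def by (rule lift_Suc_antimono_le)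
  then show mem: "k \<le> l \<Longrightarrow> x l \<in> closed_ball_in M d (x k) (r k)" for k l
    using centre unfolding B_def by blast
  show "i \<le> k \<Longrightarrow> i \<le> l \<Longrightarrow> d (x k) (x l) \<le> r i"
    using ultrametric_dist_le_radius[OF ultra x[of i] x[of k] x[of l]] mem[of i k] mem[of i l]
    unfolding closed_ball_in_def by blast
qed

lemma ultrametric_nested_balls_zero_radius:
  assumes ultra: "ultrametric_space M d" and x: "\<And>k. x k \<in> M" and r: "\<And>k. 0 \<le> r k"
    and nested: "\<And>k. closed_ball_in M d (x (Suc k)) (r (Suc k)) \<subseteq> closed_ball_in M d (x k) (r k)"
    and "r i = 0"
  shows "x i \<in> closed_ball_in M d (x k) (r k)"
proof -
  note mem = ultrametric_nested_balls_centre_mem[of M d x r, OF ultra x r nested]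
  note close = ultrametric_nested_balls_centres_close[of M d x r, OF ultra x r nested]
  have metric: "Metric_space M d"
    using ultra unfolding ultrametric_space_def by blast
  have eq: "x j = x i" if "i \<le> j" for j
  proof -
    have "d (x i) (x j) = 0"
      using close[OF order.refl that] \<open>r i = 0\<close> Metric_space.nonneg[OF metric, of "x i" "x j"]
      by linarith
    then show ?thesis
      using Metric_space.zero[OF metric x x] by simp
  qed
  show ?thesis
  proof (cases "k \<le> i")
    case True
    then show ?thesis by (rule mem)
  next
    case False
    then show ?thesis
      using mem[of k k] eq[of k] by simp
  qed
qed

text \<open>Unless some radius is zero, the running minima of the radii are positive and decreasing.\<close>

lemma spherically_completeI_ultrametric:
  assumes ultra: "ultrametric_space M d"
    and limit: "\<And>(x :: nat \<Rightarrow> 'a) s. (\<And>k. x k \<in> M) \<Longrightarrow> (\<And>k. 0 < s k) \<Longrightarrow> (\<And>k l. k \<le> l \<Longrightarrow> s l \<le> s k) \<Longrightarrow>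
      (\<And>k l. k \<le> l \<Longrightarrow> d (x k) (x l) \<le> s k) \<Longrightarrow> \<exists>y\<in>M. \<forall>k. d (x k) y \<le> s k"
  shows "spherically_complete M d"
  unfolding spherically_complete_def
proof (intro allI impI)
  fix x :: "nat \<Rightarrow> 'a" and r :: "nat \<Rightarrow> real"
  assume "(\<forall>k. x k \<in> M \<and> 0 \<le> r k) \<and>
    (\<forall>k. closed_ball_in M d (x (Suc k)) (r (Suc k)) \<subseteq> closed_ball_in M d (x k) (r k))"
  then have x: "x k \<in> M" and r: "0 \<le> r k"
    and nested: "closed_ball_in M d (x (Suc k)) (r (Suc k)) \<subseteq> closed_ball_in M d (x k) (r k)" for k
    by simp_all
  note close = ultrametric_nested_balls_centres_close[of M d x r, OF ultra x r nested]
  show "\<exists>y. \<forall>k. y \<in> closed_ball_in M d (x k) (r k)"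
  proof (cases "\<exists>i. r i = 0")
    case True
    then obtain i where "r i = 0" by blast
    then have "x i \<in> closed_ball_in M d (x k) (r k)" for k
      using ultrametric_nested_balls_zero_radius[of M d x r, OF ultra x r nested] by blast
    then show ?thesis by blast
  next
    case False
    define s where "s k = Min (r ` {..k})" for k
    have s_attained: "s k \<in> r ` {..k}" for k
      unfolding s_def by (intro Min_in) auto
    have "\<exists>y\<in>M. \<forall>k. d (x k) y \<le> s k"
    proof (rule limit)
      show "x k \<in> M" for k
        by (rule x)
      show "0 < s k" for k
        using s_attained[of k] False r by (metis imageE less_eq_real_def)
      show "k \<le> l \<Longrightarrow> s l \<le> s k" for k l
        unfolding s_def by (intro Min_antimono) auto
      show "k \<le> l \<Longrightarrow> d (x k) (x l) \<le> s k" for k l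
        using s_attained[of k] close by fastforce
    qed
    moreover have "s k \<le> r k" for k
      unfolding s_def by (intro Min_le) auto
    ultimately show ?thesis
      unfolding closed_ball_in_def by (blast intro: order.trans)
  qed
qed

section \<open>The metric \<open>lm m\<close>\<close>

definition weight :: "nat \<Rightarrow> nat \<Rightarrow> real" where
  "weight n k = (1/2) ^ n + (1/2) ^ (n + k)"

lemma lm_eq_Inf_weight: "lm m a b = Inf {weight n k | n k. sim_nk m n k a b} / 2"
  unfolding lm_def weight_def by simp

lemma weight_pos: "0 < weight n k"
  unfolding weight_def by (intro add_pos_pos) simp_all

lemma weight_less_of_level_less:
  assumes "n < n'"
  shows "weight n' k' < weight n k"
proof -
  have "weight n' k' \<le> 2 * (1/2) ^ n'"
    unfolding weight_def by (simp add: power_add mult_left_le_one_le power_le_one)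
  also have "\<dots> \<le> (1/2) ^ n"
    using power_decreasing[of "Suc n" n' "1/2 :: real"] assms by simp
  also have "\<dots> < weight n k"
    unfolding weight_def by simp
  finally show ?thesis .
qed

lemma weight_le_iff: "weight n k \<le> weight n' k' \<longleftrightarrow> n' < n \<or> (n' = n \<and> k' \<le> k)"
proof -
  have "weight n k' < weight n k" if "k < k'" for k k'
    using that unfolding weight_def by (simp add: power_strict_decreasing)
  then show ?thesis
    using weight_less_of_level_less by (metis linorder_neqE_nat not_le order.asym)
qed

lemma ex_weight_less:
  assumes "0 < c"
  shows "\<exists>n. weight n 0 < c"
proof -
  obtain n where "(1/2 :: real) ^ n < c / 2"
    using real_arch_pow_inv[of "c / 2" "1/2"] assms by auto
  then have "weight n 0 < c"
    unfolding weight_def by simp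
  then show ?thesis ..
qed

lemma weight_greatest_le:
  fixes c :: "'a \<Rightarrow> real"
  assumes "\<And>i. 0 < c i"
  obtains P Q where "\<And>i. weight (P i) (Q i) \<le> c i"
    and "\<And>i n k. weight n k \<le> c i \<Longrightarrow> weight n k \<le> weight (P i) (Q i)"
proof -
  define P where "P i = (LEAST n. \<exists>k. weight n k \<le> c i)" for i
  define Q where "Q i = (LEAST k. weight (P i) k \<le> c i)" for i
  have "\<exists>n k. weight n k \<le> c i" for i
    using ex_weight_less[OF assms[of i]] less_imp_le by blast
  then have "\<exists>k. weight (P i) k \<le> c i" for i
    unfolding P_def by (rule LeastI_ex)
  then have "weight (P i) (Q i) \<le> c i" for i
    unfolding Q_def by (rule LeastI_ex)
  moreover have "weight n k \<le> weight (P i) (Q i)" if "weight n k \<le> c i" for i n k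
  proof -
    have "P i \<le> n" "P i = n \<Longrightarrow> Q i \<le> k"
      unfolding P_def Q_def using that by (auto intro: Least_le)
    then show ?thesis
      using weight_le_iff by (simp add: nat_less_le)
  qed
  ultimately show ?thesis using that by blast
qed

lemma Fm_is_inf_proof: "u \<in> Fm m \<Longrightarrow> ps \<in> Tuples m \<Longrightarrow> is_inf_proof (u ps)"
  unfolding Fm_def Proofs_def by blast

lemma Fm_sim:
  assumes "u \<in> Fm m" "ps \<in> Tuples m" "qs \<in> Tuples m" "\<And>i. i < m \<Longrightarrow> sim n (ps ! i) (qs ! i)"
  shows "sim n (u ps) (u qs)"
proof -
  have "\<forall>ps\<in>Tuples m. \<forall>qs\<in>Tuples m. \<forall>n. (\<forall>i<m. sim n (ps ! i) (qs ! i)) \<longrightarrow> sim n (u ps) (u qs)"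
    using assms(1) unfolding Fm_def by blast
  then show ?thesis
    using assms(2-4) by blast
qed

lemma Fm_eqI: "a \<in> Fm m \<Longrightarrow> b \<in> Fm m \<Longrightarrow> (\<And>ps. ps \<in> Tuples m \<Longrightarrow> a ps = b ps) \<Longrightarrow> a = b"
  by (rule extensionalityI[of _ "Tuples m"]) (simp_all add: Fm_def)

lemma sim_nk_0_0: "sim_nk m 0 0 a b"
  unfolding sim_nk_def by simp

lemma sim_nk_refl: "sim_nk m n k a a"
  unfolding sim_nk_def by simp

lemma sim_nk_sym: "sim_nk m n k a b \<Longrightarrow> sim_nk m n k b a"
  unfolding sim_nk_def by (blast intro: sim_sym)

lemma sim_nk_trans: "sim_nk m n k a b \<Longrightarrow> sim_nk m n k b c \<Longrightarrow> sim_nk m n k a c"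
  unfolding sim_nk_def by (blast intro: sim_trans)

lemma sim_nk_Suc_0:
  assumes "\<And>k. sim_nk m n k a b"
  shows "sim_nk m (Suc n) 0 a b"
  unfolding sim_nk_def
proof (intro conjI ballI impI)
  show "sim (Suc n) (a ps) (b ps)" if "ps \<in> Tuples m" for ps
    using assms[of "Suc (sum_list (map loc_height ps))"] that unfolding sim_nk_def by simp
qed simp

lemma sim_nk_mono:
  assumes a: "a \<in> Fm m" and b: "b \<in> Fm m" and sim: "sim_nk m n k a b"
    and le: "weight n k \<le> weight n' k'"
  shows "sim_nk m n' k' a b"
  unfolding sim_nk_def
proof (intro conjI ballI impI)
  fix ps
  assume ps: "ps \<in> Tuples m"
  note proofs = Fm_is_inf_proof[OF a ps] Fm_is_inf_proof[OF b ps]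
  have s: "sim n (a ps) (b ps)"
    using sim ps unfolding sim_nk_def by blast
  have lex: "n' < n \<or> (n' = n \<and> k' \<le> k)"
    using le weight_le_iff by blast
  then show "sim n' (a ps) (b ps)"
    using sim_mono[OF proofs s] by auto
  assume "sum_list (map loc_height ps) < k'"
  then show "sim (Suc n') (a ps) (b ps)"
    using lex sim_mono[OF proofs s] sim ps unfolding sim_nk_def by auto
qed

lemma lm_le_weight: "sim_nk m n k a b \<Longrightarrow> lm m a b \<le> weight n k / 2"
  unfolding lm_eq_Inf_weight
  by (intro divide_right_mono cInf_lower) (auto intro: bdd_belowI[of _ 0] less_imp_le[OF weight_pos])

lemma lm_nonneg: "0 \<le> lm m a b"
  unfolding lm_eq_Inf_weight
  by (intro divide_nonneg_pos cInf_greatest) (auto intro: sim_nk_0_0 less_imp_le[OF weight_pos])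

lemma lm_sym: "lm m a b = lm m b a"
  unfolding lm_def using sim_nk_sym by metis

lemma lm_self: "lm m a a = 0"
proof -
  have "lm m a a \<le> 0 + c" if "0 < c" for c
  proof -
    obtain n where "weight n 0 < 2 * c"
      using ex_weight_less[of "2 * c"] \<open>0 < c\<close> by auto
    then show ?thesis
      using lm_le_weight[of m n 0 a a] sim_nk_refl by simp
  qed
  then show ?thesis
    using field_le_epsilon lm_nonneg order.antisym by metis
qed

lemma sim_nk_level_bounded:
  assumes a: "a \<in> Fm m" and b: "b \<in> Fm m" and "a \<noteq> b"
  obtains N where "\<And>n k. sim_nk m n k a b \<Longrightarrow> n < N"
proof -
  obtain ps where ps: "ps \<in> Tuples m" "a ps \<noteq> b ps"
    using Fm_eqI[OF a b] \<open>a \<noteq> b\<close> by blast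
  then obtain N where N: "\<not> sim N (a ps) (b ps)"
    using sim_all_imp_eq by blast
  have "n < N" if "sim_nk m n k a b" for n k
  proof (rule ccontr)
    assume "\<not> n < N"
    moreover have "sim n (a ps) (b ps)"
      using that ps(1) unfolding sim_nk_def by blast
    ultimately show False
      using N sim_mono[OF Fm_is_inf_proof[OF a ps(1)] Fm_is_inf_proof[OF b ps(1)]] by simp
  qed
  then show ?thesis using that by blast
qed

lemma sim_nk_less_of_not_sim_nk:
  assumes a: "a \<in> Fm m" and b: "b \<in> Fm m" and "sim_nk m n k a b" "\<not> sim_nk m n K a b"
  shows "k < K"
proof (rule ccontr)
  assume "\<not> k < K"
  then have "weight n k \<le> weight n K"
    using weight_le_iff by simp
  then show False
    using sim_nk_mono[OF a b \<open>sim_nk m n k a b\<close>] \<open>\<not> sim_nk m n K a b\<close> by blast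
qed

text \<open>The levels \<open>n\<close> of the relations \<open>sim_nk m n k a b\<close> are bounded, and at the top
  level so are the \<open>k\<close>, since otherwise \<open>sim_nk m (Suc n) 0 a b\<close> would hold.\<close>

lemma sim_nk_greatest:
  assumes a: "a \<in> Fm m" and b: "b \<in> Fm m" and "a \<noteq> b"
  obtains n k where "sim_nk m n k a b" "\<And>n' k'. sim_nk m n' k' a b \<Longrightarrow> weight n k \<le> weight n' k'"
proof -
  obtain N where N: "\<And>n k. sim_nk m n k a b \<Longrightarrow> n < N"
    using sim_nk_level_bounded[OF assms] by blast
  define A where "A = {n. \<exists>k. sim_nk m n k a b}"
  have A: "finite A" "A \<noteq> {}"
    using N sim_nk_0_0[of m a b] unfolding A_def by (auto intro: finite_subset[of _ "{..<N}"])
  define n where "n = Max A"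
  have "Suc n \<notin> A"
    using Max_ge[OF A(1), of "Suc n"] unfolding n_def by auto
  then obtain K where K: "\<not> sim_nk m n K a b"
    using sim_nk_Suc_0 unfolding A_def by blast
  define B where "B = {k. sim_nk m n k a b}"
  have "B \<subseteq> {..<K}"
    using sim_nk_less_of_not_sim_nk[OF a b _ K] unfolding B_def by blast
  moreover have "n \<in> A"
    using Max_in[OF A] unfolding n_def .
  ultimately have B: "finite B" "B \<noteq> {}"
    unfolding A_def B_def by (auto intro: finite_subset)
  define k where "k = Max B"
  have "sim_nk m n k a b"
    using Max_in[OF B] unfolding B_def k_def by blast
  moreover have "weight n k \<le> weight n' k'" if "sim_nk m n' k' a b" for n' k'
  proof -
    have "n' \<le> n" "n' = n \<Longrightarrow> k' \<le> k"
      using that Max_ge[OF A(1)] Max_ge[OF B(1)] unfolding A_def B_def n_def k_def by auto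
    then show ?thesis
      using weight_le_iff by (simp add: nat_less_le)
  qed
  ultimately show ?thesis using that by blast
qed

lemma lm_eq_weight:
  assumes "a \<in> Fm m" "b \<in> Fm m" "a \<noteq> b"
  obtains n k where "sim_nk m n k a b" "lm m a b = weight n k / 2"
proof -
  obtain n k where nk: "sim_nk m n k a b" "\<And>n' k'. sim_nk m n' k' a b \<Longrightarrow> weight n k \<le> weight n' k'"
    using sim_nk_greatest[OF assms] by blast
  then have "Inf {weight n k | n k. sim_nk m n k a b} = weight n k"
    by (intro cInf_eq_minimum) auto
  then show ?thesis
    using that[OF nk(1)] unfolding lm_eq_Inf_weight by simp
qed

lemma lm_eq_0_iff:
  assumes "a \<in> Fm m" "b \<in> Fm m"
  shows "lm m a b = 0 \<longleftrightarrow> a = b"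
  using lm_eq_weight[OF assms] weight_pos lm_self by (metis divide_eq_0_iff less_irrefl zero_neq_numeral)

lemma lm_le_imp_sim_nk:
  assumes "a \<in> Fm m" "b \<in> Fm m" "0 < s" "lm m a b \<le> s"
  obtains n k where "sim_nk m n k a b" "weight n k \<le> 2 * s"
proof (cases "a = b")
  case True
  obtain n where "weight n 0 < 2 * s"
    using ex_weight_less[of "2 * s"] assms(3) by auto
  then show ?thesis
    using that[of n 0] sim_nk_refl True by simp
next
  case False
  obtain n k where "sim_nk m n k a b" "lm m a b = weight n k / 2"
    using lm_eq_weight[OF assms(1,2) False] by blast
  then show ?thesis
    using that[of n k] assms(4) by simp
qed

lemma lm_ultra:
  assumes a: "a \<in> Fm m" and b: "b \<in> Fm m" and c: "c \<in> Fm m"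
  shows "lm m a c \<le> max (lm m a b) (lm m b c)"
proof (cases "a = b \<or> b = c")
  case True
  then show ?thesis using lm_self by auto
next
  case False
  obtain n1 k1 where ab: "sim_nk m n1 k1 a b" "lm m a b = weight n1 k1 / 2"
    using lm_eq_weight[OF a b] False by blast
  obtain n2 k2 where bc: "sim_nk m n2 k2 b c" "lm m b c = weight n2 k2 / 2"
    using lm_eq_weight[OF b c] False by blast
  show ?thesis
  proof (cases "weight n2 k2 \<le> weight n1 k1")
    case True
    then have "sim_nk m n1 k1 a c"
      using sim_nk_trans[OF ab(1) sim_nk_mono[OF b c bc(1)]] by blast
    then have "lm m a c \<le> weight n1 k1 / 2"
      by (rule lm_le_weight)
    then show ?thesis
      using ab(2) by simp
  next
    case False
    then have "sim_nk m n2 k2 a c"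
      using sim_nk_trans[OF sim_nk_mono[OF a b ab(1)] bc(1)] by simp
    then have "lm m a c \<le> weight n2 k2 / 2"
      by (rule lm_le_weight)
    then show ?thesis
      using bc(2) by simp
  qed
qed

lemma ultrametric_space_Fm: "ultrametric_space (Fm m) (lm m)"
  using lm_nonneg lm_sym lm_eq_0_iff lm_ultra by (rule ultrametric_spaceI)

section \<open>Spherical completeness\<close>

lemma proof_limit_sim:
  fixes t t' :: "nat \<Rightarrow> tree" and e :: "nat \<Rightarrow> nat"
  assumes proofs: "\<And>j. is_inf_proof (t j)" "\<And>j. is_inf_proof (t' j)" and "mono e"
    and cauchy: "\<And>j l. j \<le> l \<Longrightarrow> sim (e j) (t j) (t l)" "\<And>j l. j \<le> l \<Longrightarrow> sim (e j) (t' j) (t' l)"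
    and sim: "\<And>j. sim n (t j) (t' j)"
  shows "sim n (proof_limit t e) (proof_limit t' e)"
proof (cases "bdd_above (range e)")
  case True
  then show ?thesis
    using sim unfolding proof_limit_def by simp
next
  case False
  then obtain j where j: "n \<le> e j"
    by (rule not_bdd_above_range_natE)
  note lim = proof_limit[OF proofs(1) \<open>mono e\<close> cauchy(1)] proof_limit[OF proofs(2) \<open>mono e\<close> cauchy(2)]
  have "sim n (t j) (proof_limit t e)" "sim n (t' j) (proof_limit t' e)"
    using lim sim_mono[OF proofs(1)] sim_mono[OF proofs(2)] j by blast+
  then show ?thesis
    using sim[of j] sim_sym sim_trans by blast
qed

definition level :: "nat \<Rightarrow> nat \<Rightarrow> nat \<Rightarrow> nat" where
  "level n k h = (if h < k then Suc n else n)"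

lemma level_antimono:
  "weight n k \<le> weight n' k' \<Longrightarrow> level n' k' h \<le> level n k h"
  using weight_le_iff unfolding level_def by auto

lemma sim_nk_iff_level:
  assumes a: "a \<in> Fm m" and b: "b \<in> Fm m"
  shows "sim_nk m n k a b \<longleftrightarrow>
    (\<forall>ps\<in>Tuples m. sim (level n k (sum_list (map loc_height ps))) (a ps) (b ps))"
proof -
  have "sim n (a ps) (b ps)" if "ps \<in> Tuples m" "sim (Suc n) (a ps) (b ps)" for ps
    using sim_mono[OF Fm_is_inf_proof[OF a] Fm_is_inf_proof[OF b]] that by simp
  then show ?thesis
    unfolding sim_nk_def level_def by (auto split: if_splits)
qed

lemma Tuples_nth_is_inf_proof: "ps \<in> Tuples m \<Longrightarrow> i < m \<Longrightarrow> is_inf_proof (ps ! i)"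
  unfolding Tuples_def Proofs_def using nth_mem by fastforce

lemma sum_loc_height_eq_if_sim:
  assumes ps: "ps \<in> Tuples m" and qs: "qs \<in> Tuples m"
    and sim: "\<And>i. i < m \<Longrightarrow> sim n (ps ! i) (qs ! i)" and "0 < n"
  shows "sum_list (map loc_height ps) = sum_list (map loc_height qs)"
proof -
  have len: "length ps = m" "length qs = m"
    using ps qs unfolding Tuples_def by auto
  have "loc_height (ps ! i) = loc_height (qs ! i)" if "i < m" for i
    using loc_height_sim[OF Tuples_nth_is_inf_proof[OF ps that] Tuples_nth_is_inf_proof[OF qs that]
        sim[OF that] \<open>0 < n\<close>] .
  then have "map loc_height ps = map loc_height qs"
    using len by (intro nth_equalityI) auto
  then show ?thesis by simp
qed

text \<open>Since \<open>sim n\<close> with \<open>n > 0\<close> preserves local heights, tuples that are \<open>n\<close>-close use the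
  same levels \<open>e h\<close>, which makes the tuplewise limit non-expansive.\<close>

lemma tuplewise_proof_limit_in_Fm:
  fixes x :: "nat \<Rightarrow> tree list \<Rightarrow> tree" and e :: "nat \<Rightarrow> nat \<Rightarrow> nat"
  assumes x: "\<And>k. x k \<in> Fm m" and mono: "\<And>h. mono (e h)"
    and close: "\<And>ps k l. ps \<in> Tuples m \<Longrightarrow> k \<le> l \<Longrightarrow>
      sim (e (sum_list (map loc_height ps)) k) (x k ps) (x l ps)"
  shows "(\<lambda>ps. if ps \<in> Tuples m then proof_limit (\<lambda>k. x k ps) (e (sum_list (map loc_height ps)))
      else undefined) \<in> Fm m" (is "?y \<in> Fm m")
  unfolding Fm_def Proofs_def
proof (intro CollectI conjI ballI allI impI)
  note proofs = Fm_is_inf_proof[OF x]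
  show "?y \<in> extensional (Tuples m)"
    unfolding extensional_def by simp
  show "is_inf_proof (?y ps)" if "ps \<in> Tuples m" for ps
    using proof_limit[OF proofs[OF that] mono close[OF that]] that by simp
  fix ps qs n
  assume ps: "ps \<in> Tuples m" and qs: "qs \<in> Tuples m" and sim: "\<forall>i<m. sim n (ps ! i) (qs ! i)"
  show "sim n (?y ps) (?y qs)"
  proof (cases "n = 0")
    case False
    then have eq: "sum_list (map loc_height ps) = sum_list (map loc_height qs)"
      using sum_loc_height_eq_if_sim[OF ps qs, of n] sim by simp
    have "sim n (x k ps) (x k qs)" for k
      using Fm_sim[OF x ps qs] sim by blast
    then show ?thesis
      using proof_limit_sim[OF proofs[OF ps] proofs[OF qs] mono close[OF ps] close[OF qs, folded eq]]
        ps qs eq by simp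
  qed simp
qed

lemma sim_nk_nested_limit:
  fixes x :: "nat \<Rightarrow> tree list \<Rightarrow> tree" and P Q :: "nat \<Rightarrow> nat"
  assumes x: "\<And>k. x k \<in> Fm m"
    and dec: "\<And>k l. k \<le> l \<Longrightarrow> weight (P l) (Q l) \<le> weight (P k) (Q k)"
    and cauchy: "\<And>k l. k \<le> l \<Longrightarrow> sim_nk m (P k) (Q k) (x k) (x l)"
  obtains y where "y \<in> Fm m" "\<And>k. sim_nk m (P k) (Q k) (x k) y"
proof -
  define e where "e h k = level (P k) (Q k) h" for h k
  define y where "y ps = (if ps \<in> Tuples m
      then proof_limit (\<lambda>k. x k ps) (e (sum_list (map loc_height ps))) else undefined)" for ps
  have mono: "mono (e h)" for h
    using dec level_antimono unfolding mono_def e_def by blast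
  have close: "sim (e (sum_list (map loc_height ps)) k) (x k ps) (x l ps)"
    if "ps \<in> Tuples m" "k \<le> l" for ps k l
    using cauchy[OF that(2)] sim_nk_iff_level[OF x x] that(1) unfolding e_def by blast
  have "y \<in> Fm m"
    unfolding y_def using x mono close by (rule tuplewise_proof_limit_in_Fm)
  moreover have "sim_nk m (P k) (Q k) (x k) y" for k
    using proof_limit[OF Fm_is_inf_proof[OF x] mono close] sim_nk_iff_level[OF x \<open>y \<in> Fm m\<close>]
    unfolding y_def e_def by simp
  ultimately show ?thesis using that by blast
qed

lemma Fm_nested_limit:
  fixes x :: "nat \<Rightarrow> tree list \<Rightarrow> tree" and s :: "nat \<Rightarrow> real"
  assumes x: "\<And>k. x k \<in> Fm m" and s_pos: "\<And>k. 0 < s k" and s_dec: "\<And>k l. k \<le> l \<Longrightarrow> s l \<le> s k"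
    and close: "\<And>k l. k \<le> l \<Longrightarrow> lm m (x k) (x l) \<le> s k"
  shows "\<exists>y\<in>Fm m. \<forall>k. lm m (x k) y \<le> s k"
proof -
  have "0 < 2 * s k" for k
    using s_pos[of k] by simp
  then obtain P Q where PQ: "\<And>k. weight (P k) (Q k) \<le> 2 * s k"
    and greatest: "\<And>k n q. weight n q \<le> 2 * s k \<Longrightarrow> weight n q \<le> weight (P k) (Q k)"
    using weight_greatest_le[of "\<lambda>k. 2 * s k"] by blast
  have "weight (P l) (Q l) \<le> weight (P k) (Q k)" if "k \<le> l" for k l
    using PQ[of l] s_dec[OF that] by (intro greatest) linarith
  moreover have "sim_nk m (P k) (Q k) (x k) (x l)" if kl: "k \<le> l" for k l
  proof -
    obtain n q where "sim_nk m n q (x k) (x l)" "weight n q \<le> 2 * s k"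
      using lm_le_imp_sim_nk[OF x x s_pos close[OF kl]] by blast
    then show ?thesis
      using sim_nk_mono[OF x[of k] x[of l]] greatest[of n q k] by simp
  qed
  ultimately obtain y where y: "y \<in> Fm m" "\<And>k. sim_nk m (P k) (Q k) (x k) y"
    using sim_nk_nested_limit[of x m P Q] x by blast
  have "lm m (x k) y \<le> s k" for k
    using lm_le_weight[OF y(2)[of k]] PQ[of k] by simp
  then show ?thesis
    using y(1) by blast
qed

theorem proposition4p3:
  fixes m :: nat
  shows "ultrametric_space (Fm m) (lm m) \<and> spherically_complete (Fm m) (lm m)"
  using ultrametric_space_Fm spherically_completeI_ultrametric[OF ultrametric_space_Fm Fm_nested_limit]
  by blast

end
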